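(* Consider a finite reward-free MDP with occupancy polytope $\Phi$. Let $\mathcal D=\{(d_e^k,\epsilon^k)\}_{k=1}^K$ with $d_e^k\in\Phi$, $\epsilon^k\ge0$, let $d_e'\in\Phi$, $\epsilon'\ge0$, and $\mathcal D^+:=\mathcal D\cup\{(d_e',\epsilon')\}$. Let $\mathcal R^\star\subseteq\Delta(S\times A)$ be the ground-truth reward set and suppose the consistency assumption holds for $\mathcal D$ and $\mathcal D^+$, i.e. $\mathcal R^\star\subseteq\mathcal R(\mathcal D)$ and $\mathcal R^\star\subseteq\mathcal R(\mathcal D^+)$. Then \[\mathcal R^\star\subseteq\mathcal R(\mathcal D^+)\subsetneq\mathcal R(\mathcal D)\quad\text{if and only if}\quad \epsilon'<\max_{r\in\mathcal R(\mathcal D)}\mathrm{subopt}(r,d_e').\]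
   Context: The MDP has finite $S$, $A$, transitions $P$, initial distribution $\mu_0$, discount $\gamma\in(0,1)$; $(Md)(s)=\sum_a d(s,a)-\gamma\sum_{s',a'}P(s\mid s',a')d(s',a')$ and $\Phi=\{d\ge0:Md=(1-\gamma)\mu_0\}$. Rewards are $r\in\Delta(S\times A)$. $\mathrm{subopt}(r,d):=\max_{\tilde d\in\Phi}r^\top\tilde d-r^\top d$. For a dataset $\mathcal D=\{(d_e^k,\epsilon^k)\}_k$, $\mathcal R(\mathcal D):=\{r\in\Delta(S\times A):\mathrm{subopt}(r,d_e^k)\le\epsilon^k\ \forall k\}$. *)

theory Defs
  imports Complex_Main
begin

text \<open>Transition kernel P s (s',a') = P(s | s',a'); initial distribution mu0; discount gamma.\<close>

definition is_kernel :: "('s::finite \<Rightarrow> 's \<times> 'a::finite \<Rightarrow> real) \<Rightarrow> bool" where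
  "is_kernel P \<longleftrightarrow> (\<forall>s' a'. (\<forall>s. P s (s',a') \<ge> 0) \<and> (\<Sum>s\<in>UNIV. P s (s',a')) = 1)"

definition is_distr :: "('x::finite \<Rightarrow> real) \<Rightarrow> bool" where
  "is_distr f \<longleftrightarrow> (\<forall>x. f x \<ge> 0) \<and> (\<Sum>x\<in>UNIV. f x) = 1"

definition flowM :: "('s::finite \<Rightarrow> 's \<times> 'a::finite \<Rightarrow> real) \<Rightarrow> real \<Rightarrow> ('s \<times> 'a \<Rightarrow> real) \<Rightarrow> 's \<Rightarrow> real" where
  "flowM P \<gamma> d s = (\<Sum>a\<in>UNIV. d (s,a)) - \<gamma> * (\<Sum>sa\<in>UNIV. P s sa * d sa)"

definition Occ :: "('s::finite \<Rightarrow> 's \<times> 'a::finite \<Rightarrow> real) \<Rightarrow> ('s \<Rightarrow> real) \<Rightarrow> real \<Rightarrow> ('s \<times> 'a \<Rightarrow> real) set" where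
  "Occ P \<mu>0 \<gamma> = {d. (\<forall>x. d x \<ge> 0) \<and> (\<forall>s. flowM P \<gamma> d s = (1 - \<gamma>) * \<mu>0 s)}"

definition inner_sa :: "('x::finite \<Rightarrow> real) \<Rightarrow> ('x \<Rightarrow> real) \<Rightarrow> real" where
  "inner_sa r d = (\<Sum>x\<in>UNIV. r x * d x)"

definition Rewards :: "('s::finite \<times> 'a::finite \<Rightarrow> real) set" where
  "Rewards = {r. is_distr r}"

text \<open>subopt(r,d) = max_{d'\<in>Phi} r.d' - r.d (the max is attained; written as Sup)\<close>
definition subopt :: "('s::finite \<Rightarrow> 's \<times> 'a::finite \<Rightarrow> real) \<Rightarrow> ('s \<Rightarrow> real) \<Rightarrow> real
    \<Rightarrow> ('s \<times> 'a \<Rightarrow> real) \<Rightarrow> ('s \<times> 'a \<Rightarrow> real) \<Rightarrow> real" where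
  "subopt P \<mu>0 \<gamma> r d = Sup ((\<lambda>d'. inner_sa r d') ` Occ P \<mu>0 \<gamma>) - inner_sa r d"

definition RD :: "('s::finite \<Rightarrow> 's \<times> 'a::finite \<Rightarrow> real) \<Rightarrow> ('s \<Rightarrow> real) \<Rightarrow> real
    \<Rightarrow> (('s \<times> 'a \<Rightarrow> real) \<times> real) list \<Rightarrow> ('s \<times> 'a \<Rightarrow> real) set" where
  "RD P \<mu>0 \<gamma> D = {r \<in> Rewards. \<forall>(de, \<epsilon>) \<in> set D. subopt P \<mu>0 \<gamma> r de \<le> \<epsilon>}"

end

theory Submission
  imports Defs
begin

text \<open>Appending the demonstration \<open>(d\<^sub>e', \<epsilon>')\<close> intersects \<open>\<R>(\<D>)\<close> with the sublevel set
  \<open>{r. subopt(r, d\<^sub>e') \<le> \<epsilon>'}\<close>, so the inclusion is strict iff some \<open>r \<in> \<R>(\<D>)\<close> has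
  \<open>subopt(r, d\<^sub>e') > \<epsilon>'\<close>, i.e. iff \<open>\<epsilon>'\<close> lies below the supremum. This characterisation of the
  supremum needs the set of values to be nonempty and bounded: the uniform reward is feasible for
  every dataset, since all occupancy measures have total mass 1 and hence earn it the same return,
  and \<open>subopt \<le> 1\<close> because rewards are distributions.\<close>

lemma Collect_le_psubset_iff_less_cSup:
  fixes f :: "'a \<Rightarrow> 'b::conditionally_complete_linorder"
  assumes "A \<noteq> {}" and "bdd_above (f ` A)"
  shows "{x \<in> A. f x \<le> e} \<subset> A \<longleftrightarrow> e < Sup (f ` A)"
proof -
  have "{x \<in> A. f x \<le> e} \<subset> A \<longleftrightarrow> (\<exists>x\<in>A. e < f x)"
    by (force simp: not_le)
  also have "\<dots> \<longleftrightarrow> e < Sup (f ` A)"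
    using less_cSup_iff[of "f ` A" e] assms by auto
  finally show ?thesis .
qed

lemma Occ_sum_eq_1:
  fixes P :: "'s::finite \<Rightarrow> 's \<times> 'a::finite \<Rightarrow> real"
  assumes K: "is_kernel P" and M: "is_distr \<mu>0" and g: "\<gamma> \<noteq> 1"
    and d: "d \<in> Occ P \<mu>0 \<gamma>"
  shows "(\<Sum>x\<in>UNIV. d x) = 1"
proof -
  have "(\<Sum>s\<in>UNIV. flowM P \<gamma> d s) = (\<Sum>s\<in>UNIV. (1 - \<gamma>) * \<mu>0 s)"
    using d by (simp add: Occ_def)
  also have "\<dots> = 1 - \<gamma>"
    using M by (simp add: is_distr_def sum_distrib_left[symmetric])
  finally have total_flow: "(\<Sum>s\<in>UNIV. flowM P \<gamma> d s) = 1 - \<gamma>" .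
  have state_marginal: "(\<Sum>s\<in>UNIV. \<Sum>a\<in>UNIV. d (s,a)) = (\<Sum>x\<in>UNIV. d x)"
    by (simp add: sum.cartesian_product UNIV_Times_UNIV[symmetric] del: UNIV_Times_UNIV)
  have "(\<Sum>s\<in>UNIV. \<Sum>sa\<in>UNIV. P s sa * d sa) = (\<Sum>sa\<in>UNIV. (\<Sum>s\<in>UNIV. P s sa) * d sa)"
    by (subst sum.swap) (simp add: sum_distrib_right)
  also have "\<dots> = (\<Sum>x\<in>UNIV. d x)"
    using K by (intro sum.cong) (auto simp: is_kernel_def)
  finally have inflow: "(\<Sum>s\<in>UNIV. \<Sum>sa\<in>UNIV. P s sa * d sa) = (\<Sum>x\<in>UNIV. d x)" .
  have "(\<Sum>s\<in>UNIV. flowM P \<gamma> d s) = (1 - \<gamma>) * (\<Sum>x\<in>UNIV. d x)"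
    unfolding flowM_def sum_subtractf sum_distrib_left[symmetric] state_marginal inflow
    by (simp add: algebra_simps)
  with total_flow g show ?thesis by simp
qed

lemma inner_sa_nonneg:
  assumes "\<And>x. 0 \<le> r x" and "\<And>x. 0 \<le> d x"
  shows "0 \<le> inner_sa r d"
  unfolding inner_sa_def using assms by (simp add: sum_nonneg)

lemma inner_sa_le_sum:
  assumes r: "is_distr r" and d: "\<And>x. 0 \<le> d x"
  shows "inner_sa r d \<le> (\<Sum>x\<in>UNIV. d x)"
proof -
  have "r x \<le> 1" for x
    using r member_le_sum[of x UNIV r] by (auto simp: is_distr_def)
  then show ?thesis
    unfolding inner_sa_def by (intro sum_mono) (metis d mult_right_mono mult_1)
qed

lemma inner_sa_const_Occ:
  fixes P :: "'s::finite \<Rightarrow> 's \<times> 'a::finite \<Rightarrow> real"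
  assumes "is_kernel P" and "is_distr \<mu>0" and "\<gamma> \<noteq> 1" and "d \<in> Occ P \<mu>0 \<gamma>"
  shows "inner_sa (\<lambda>_. c) d = c"
  using Occ_sum_eq_1[OF assms] by (simp add: inner_sa_def sum_distrib_left[symmetric])

lemma subopt_const_eq_0:
  fixes P :: "'s::finite \<Rightarrow> 's \<times> 'a::finite \<Rightarrow> real"
  assumes K: "is_kernel P" and M: "is_distr \<mu>0" and g: "\<gamma> \<noteq> 1"
    and d: "d \<in> Occ P \<mu>0 \<gamma>"
  shows "subopt P \<mu>0 \<gamma> (\<lambda>_. c) d = 0"
proof -
  have "(\<lambda>d'. inner_sa (\<lambda>_. c) d') ` Occ P \<mu>0 \<gamma> = {c}"
    using d inner_sa_const_Occ[OF K M g] by force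
  then show ?thesis
    by (simp add: subopt_def inner_sa_const_Occ[OF K M g d])
qed

lemma subopt_le_1:
  fixes P :: "'s::finite \<Rightarrow> 's \<times> 'a::finite \<Rightarrow> real"
  assumes K: "is_kernel P" and M: "is_distr \<mu>0" and g: "\<gamma> \<noteq> 1"
    and d: "d \<in> Occ P \<mu>0 \<gamma>" and r: "r \<in> Rewards"
  shows "subopt P \<mu>0 \<gamma> r d \<le> 1"
proof -
  have r_distr: "is_distr r" and r_nonneg: "\<And>x. 0 \<le> r x"
    using r by (auto simp: Rewards_def is_distr_def)
  have value_le_1: "inner_sa r d' \<le> 1" if "d' \<in> Occ P \<mu>0 \<gamma>" for d'
  proof -
    have "\<And>x. 0 \<le> d' x" using that unfolding Occ_def by blast
    then show ?thesis
      using inner_sa_le_sum[OF r_distr] Occ_sum_eq_1[OF K M g that] by metis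
  qed
  have "Sup ((\<lambda>d'. inner_sa r d') ` Occ P \<mu>0 \<gamma>) \<le> 1"
    using d value_le_1 by (intro cSup_least) auto
  moreover have "0 \<le> inner_sa r d"
    using d r_nonneg unfolding Occ_def by (blast intro: inner_sa_nonneg)
  ultimately show ?thesis
    by (simp add: subopt_def)
qed

lemma uniform_reward_in_RD:
  fixes P :: "'s::finite \<Rightarrow> 's \<times> 'a::finite \<Rightarrow> real"
  assumes K: "is_kernel P" and M: "is_distr \<mu>0" and g: "\<gamma> \<noteq> 1"
    and D: "\<forall>(de, \<epsilon>) \<in> set D. de \<in> Occ P \<mu>0 \<gamma> \<and> \<epsilon> \<ge> 0"
  shows "(\<lambda>_. 1 / real (card (UNIV :: ('s \<times> 'a) set))) \<in> RD P \<mu>0 \<gamma> D"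
  using D subopt_const_eq_0[OF K M g]
  by (fastforce simp: RD_def Rewards_def is_distr_def)

lemma RD_snoc:
  "RD P \<mu>0 \<gamma> (D @ [(de, \<epsilon>)]) = {r \<in> RD P \<mu>0 \<gamma> D. subopt P \<mu>0 \<gamma> r de \<le> \<epsilon>}"
  by (auto simp: RD_def)

theorem mainTheorem5:
  fixes P :: "'s::finite \<Rightarrow> 's \<times> 'a::finite \<Rightarrow> real"
    and \<mu>0 :: "'s \<Rightarrow> real" and \<gamma> :: real
    and D :: "(('s \<times> 'a \<Rightarrow> real) \<times> real) list"
    and de' :: "'s \<times> 'a \<Rightarrow> real" and \<epsilon>' :: real
    and Rstar :: "('s \<times> 'a \<Rightarrow> real) set"
  assumes "is_kernel P" and "is_distr \<mu>0" and "0 < \<gamma>" and "\<gamma> < 1"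
    and "\<forall>(de, \<epsilon>) \<in> set D. de \<in> Occ P \<mu>0 \<gamma> \<and> \<epsilon> \<ge> 0"
    and "de' \<in> Occ P \<mu>0 \<gamma>" and "\<epsilon>' \<ge> 0"
    and "Rstar \<subseteq> Rewards"
    and "Rstar \<subseteq> RD P \<mu>0 \<gamma> D"
    and "Rstar \<subseteq> RD P \<mu>0 \<gamma> (D @ [(de', \<epsilon>')])"
  shows "(Rstar \<subseteq> RD P \<mu>0 \<gamma> (D @ [(de', \<epsilon>')]) \<and>
          RD P \<mu>0 \<gamma> (D @ [(de', \<epsilon>')]) \<subset> RD P \<mu>0 \<gamma> D)
     \<longleftrightarrow> \<epsilon>' < Sup ((\<lambda>r. subopt P \<mu>0 \<gamma> r de') ` RD P \<mu>0 \<gamma> D)"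
proof -
  have g: "\<gamma> \<noteq> 1" using \<open>\<gamma> < 1\<close> by simp
  have "RD P \<mu>0 \<gamma> D \<noteq> {}"
    using uniform_reward_in_RD[OF assms(1,2) g assms(5)] by blast
  moreover have "bdd_above ((\<lambda>r. subopt P \<mu>0 \<gamma> r de') ` RD P \<mu>0 \<gamma> D)"
    using subopt_le_1[OF assms(1,2) g assms(6)] by (auto intro!: bdd_aboveI simp: RD_def)
  ultimately have "RD P \<mu>0 \<gamma> (D @ [(de', \<epsilon>')]) \<subset> RD P \<mu>0 \<gamma> D
      \<longleftrightarrow> \<epsilon>' < Sup ((\<lambda>r. subopt P \<mu>0 \<gamma> r de') ` RD P \<mu>0 \<gamma> D)"
    unfolding RD_snoc by (rule Collect_le_psubset_iff_less_cSup)
  with \<open>Rstar \<subseteq> RD P \<mu>0 \<gamma> (D @ [(de', \<epsilon>')])\<close> show ?thesis by blast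
qed

end
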